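(* The proportional fair cost sharing mechanism, given by $f_{i,e}(p)=\frac{w_i(e)}{l_e^p}F_e(l_e^p)$ for $e\in p_i$ and $f_{i,e}(p)=0$ otherwise, is REP-expanded.
   Context: GND instance: finite resource set $E$; players $i \in [N]$ with strategy collections $P_i \subseteq 2^E$ and weight vectors $w_i \in \mathbb{Z}_{\geq 1}^E$; constants $q\in\mathbb{Z}_{\ge1}$, $\alpha_1,\dots,\alpha_q > 1$; for each $e$, $\sigma_e \geq 0$, $\xi_{e,j} \geq 0$ (at least one positive), and $F_e(0)=0$, $F_e(l)=\sigma_e+\sum_j \xi_{e,j} l^{\alpha_j}$ for $l>0$. Profile $p=(p_1,\dots,p_N)$, $p_i\in P_i$; load $l_e^p=\sum_{i: e\in p_i} w_i(e)$. A cost sharing mechanism $M=\{f_{i,e}\}$ is REP-expanded if for each $j\in[q]$ there are a nonnegative integer $K_j$ and nonnegative constants $x_{k,j}\in[0,\alpha_j-1]$, $y_{k,j}\in[1,\alpha_j]$, $z_{k,j}$ ($k\in[K_j]$), depending only on $\alpha_j$, with $x_{k,j}+y_{k,j}=\alpha_j$, such that for every profile $p$, player $i$ and resource $e\in p_i$: $$f_{i,e}(p)\le \sigma_e+\sum_{j\in[q]}\xi_{e,j}\sum_{k=1}^{K_j} z_{k,j}\,(l_e^p-w_i(e))^{x_{k,j}}(w_i(e))^{y_{k,j}}.$$ *)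

theory Defs
  imports Complex_Main
begin

text \<open>Real power with the mathematical convention 0^0 = 1 (Isabelle's powr has 0 powr 0 = 0).
  Only used for nonnegative bases.\<close>
definition rpow :: "real \<Rightarrow> real \<Rightarrow> real" where
  "rpow a b = (if b = 0 then 1 else a powr b)"

record 'e gnd =
  res :: "'e set"
  nplayers :: nat
  strats :: "nat \<Rightarrow> 'e set set"
  wt :: "nat \<Rightarrow> 'e \<Rightarrow> nat"
  nq :: nat
  alph :: "nat \<Rightarrow> real"
  sig :: "'e \<Rightarrow> real"
  xi :: "'e \<Rightarrow> nat \<Rightarrow> real"

definition gnd_instance :: "'e gnd \<Rightarrow> bool" where
  "gnd_instance G \<longleftrightarrow>
     finite (res G) \<and>
     (\<forall>i < nplayers G. strats G i \<subseteq> Pow (res G)) \<and>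
     (\<forall>i < nplayers G. \<forall>e \<in> res G. wt G i e \<ge> 1) \<and>
     nq G \<ge> 1 \<and>
     (\<forall>j < nq G. alph G j > 1) \<and>
     (\<forall>e \<in> res G. sig G e \<ge> 0 \<and> (\<forall>j < nq G. xi G e j \<ge> 0) \<and> (\<exists>j < nq G. xi G e j > 0))"

definition is_profile :: "'e gnd \<Rightarrow> (nat \<Rightarrow> 'e set) \<Rightarrow> bool" where
  "is_profile G p \<longleftrightarrow> (\<forall>i < nplayers G. p i \<in> strats G i)"

definition load :: "'e gnd \<Rightarrow> (nat \<Rightarrow> 'e set) \<Rightarrow> 'e \<Rightarrow> nat" where
  "load G p e = (\<Sum>i \<in> {i. i < nplayers G \<and> e \<in> p i}. wt G i e)"

definition cost_fn :: "'e gnd \<Rightarrow> 'e \<Rightarrow> real \<Rightarrow> real" where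
  "cost_fn G e l = (if l = 0 then 0 else sig G e + (\<Sum>j < nq G. xi G e j * l powr alph G j))"

text \<open>A cost sharing mechanism: instance, profile, player, resource \<mapsto> share.\<close>
type_synonym 'e mechanism = "'e gnd \<Rightarrow> (nat \<Rightarrow> 'e set) \<Rightarrow> nat \<Rightarrow> 'e \<Rightarrow> real"

definition proportional_fair :: "'e mechanism" where
  "proportional_fair G p i e =
     (if e \<in> p i then real (wt G i e) / real (load G p e) * cost_fn G e (real (load G p e)) else 0)"

text \<open>REP-expanded: constants K, x, y, z depend only on the exponent alpha.\<close>
definition rep_expanded :: "'e mechanism \<Rightarrow> bool" where
  "rep_expanded M \<longleftrightarrow>
    (\<exists>(K :: real \<Rightarrow> nat) (x :: real \<Rightarrow> nat \<Rightarrow> real) (y :: real \<Rightarrow> nat \<Rightarrow> real) (z :: real \<Rightarrow> nat \<Rightarrow> real).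
      (\<forall>a > 1. \<forall>k < K a. 0 \<le> x a k \<and> x a k \<le> a - 1 \<and> 1 \<le> y a k \<and> y a k \<le> a \<and>
                           x a k + y a k = a \<and> 0 \<le> z a k) \<and>
      (\<forall>G p i e. gnd_instance G \<and> is_profile G p \<and> i < nplayers G \<and> e \<in> p i \<longrightarrow>
         M G p i e \<le> sig G e + (\<Sum>j < nq G. xi G e j *
            (\<Sum>k < K (alph G j). z (alph G j) k *
               rpow (real (load G p e) - real (wt G i e)) (x (alph G j) k) *
               rpow (real (wt G i e)) (y (alph G j) k)))))"

end

theory Submission
  imports Defs
begin

(* For a player of weight w on a resource of load l, the share of the term l^a is
   w/l * l^a = w * ((l - w) + w)^(a-1) <= 2^(a-1) * ((l - w)^(a-1) * w + w^a),
   since (u + v)^r <= (2 max u v)^r <= 2^r (u^r + v^r). Hence two expansion terms suffice,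
   with exponent pairs (a - 1, 1) and (0, a) and coefficient 2^(a-1); the constant sigma
   is shared with factor w/l <= 1. *)

lemma powr_add_le_two_powr:
  fixes a b r :: real
  assumes "a \<ge> 0" "b \<ge> 0" "r > 0"
  shows "(a + b) powr r \<le> 2 powr r * (a powr r + b powr r)"
proof -
  have "(a + b) powr r \<le> (2 * max a b) powr r"
    by (rule powr_mono2) (use assms in auto)
  also have "\<dots> = 2 powr r * max a b powr r"
    using assms by (simp add: powr_mult)
  also have "max a b powr r \<le> a powr r + b powr r"
    by (cases "a \<le> b") (auto simp: max_def)
  hence "2 powr r * max a b powr r \<le> 2 powr r * (a powr r + b powr r)"
    by simp
  finally show ?thesis .
qed

lemma proportional_power_share_le:
  fixes w l a :: real
  assumes w: "w > 0" and wl: "w \<le> l" and a: "a > 1"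
  shows "w / l * l powr a \<le> 2 powr (a - 1) * ((l - w) powr (a - 1) * w + w powr a)"
proof -
  have "w / l * l powr a = w * ((l - w) + w) powr (a - 1)"
    using w wl by (simp add: powr_diff field_simps)
  also have "\<dots> \<le> w * (2 powr (a - 1) * ((l - w) powr (a - 1) + w powr (a - 1)))"
    using w wl a by (intro mult_left_mono powr_add_le_two_powr) auto
  also have "\<dots> = 2 powr (a - 1) * ((l - w) powr (a - 1) * w + w * w powr (a - 1))"
    by (simp add: algebra_simps)
  also have "w * w powr (a - 1) = w powr a"
    using w by (simp add: powr_diff field_simps)
  finally show ?thesis .
qed

lemma proportional_cost_share_le:
  fixes w l s :: real and c \<alpha> :: "nat \<Rightarrow> real"
  assumes w: "w > 0" and wl: "w \<le> l" and s: "s \<ge> 0"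
    and c: "\<And>j. j < q \<Longrightarrow> c j \<ge> 0" and \<alpha>: "\<And>j. j < q \<Longrightarrow> \<alpha> j > 1"
  shows "w / l * (s + (\<Sum>j<q. c j * l powr \<alpha> j))
    \<le> s + (\<Sum>j<q. c j * (2 powr (\<alpha> j - 1) * ((l - w) powr (\<alpha> j - 1) * w + w powr \<alpha> j)))"
proof -
  have "w / l * s \<le> s"
    using w wl s by (intro mult_left_le_one_le) auto
  moreover have "(\<Sum>j<q. c j * (w / l * l powr \<alpha> j))
    \<le> (\<Sum>j<q. c j * (2 powr (\<alpha> j - 1) * ((l - w) powr (\<alpha> j - 1) * w + w powr \<alpha> j)))"
    using w wl c \<alpha> by (intro sum_mono mult_left_mono proportional_power_share_le) auto
  ultimately show ?thesis
    by (simp add: distrib_left sum_distrib_left mult.left_commute)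
qed

definition pf_exp_rest :: "real \<Rightarrow> nat \<Rightarrow> real" where
  "pf_exp_rest a k = (if k = 0 then a - 1 else 0)"

definition pf_exp_own :: "real \<Rightarrow> nat \<Rightarrow> real" where
  "pf_exp_own a k = (if k = 0 then 1 else a)"

lemma pf_exponents_admissible:
  assumes "a > 1" "k < 2"
  shows "0 \<le> pf_exp_rest a k \<and> pf_exp_rest a k \<le> a - 1 \<and> 1 \<le> pf_exp_own a k \<and>
    pf_exp_own a k \<le> a \<and> pf_exp_rest a k + pf_exp_own a k = a \<and> 0 \<le> 2 powr (a - 1)"
  using assms by (auto simp: pf_exp_rest_def pf_exp_own_def)

lemma pf_expansion_eq:
  fixes u w a :: real
  assumes "a > 1" "w \<ge> 0"
  shows "(\<Sum>k<2. 2 powr (a - 1) * rpow u (pf_exp_rest a k) * rpow w (pf_exp_own a k))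
    = 2 powr (a - 1) * (u powr (a - 1) * w + w powr a)"
  using assms by (simp add: numeral_2_eq_2 pf_exp_rest_def pf_exp_own_def rpow_def algebra_simps)

lemma wt_le_load:
  assumes "i < nplayers G" "e \<in> p i"
  shows "wt G i e \<le> load G p e"
  unfolding load_def by (rule member_le_sum) (use assms in auto)

lemma proportional_fair_le_expansion:
  assumes "gnd_instance G" "is_profile G p" "i < nplayers G" "e \<in> p i"
  shows "proportional_fair G p i e \<le> sig G e + (\<Sum>j<nq G. xi G e j *
    (\<Sum>k<2. 2 powr (alph G j - 1) *
      rpow (real (load G p e) - real (wt G i e)) (pf_exp_rest (alph G j) k) *
      rpow (real (wt G i e)) (pf_exp_own (alph G j) k)))"
proof -
  have "e \<in> res G"
    using assms unfolding gnd_instance_def is_profile_def by blast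
  with assms have w: "real (wt G i e) > 0" and G: "sig G e \<ge> 0"
    "\<And>j. j < nq G \<Longrightarrow> xi G e j \<ge> 0" "\<And>j. j < nq G \<Longrightarrow> alph G j > 1"
    unfolding gnd_instance_def by (auto simp: Suc_le_eq)
  have wl: "real (wt G i e) \<le> real (load G p e)"
    using assms by (simp add: wt_le_load)
  have "proportional_fair G p i e = real (wt G i e) / real (load G p e) *
      (sig G e + (\<Sum>j<nq G. xi G e j * real (load G p e) powr alph G j))"
    using assms w wl by (simp add: proportional_fair_def cost_fn_def)
  also have "\<dots> \<le> sig G e + (\<Sum>j<nq G. xi G e j * (2 powr (alph G j - 1) *
      ((real (load G p e) - real (wt G i e)) powr (alph G j - 1) * real (wt G i e)
        + real (wt G i e) powr alph G j)))"
    by (rule proportional_cost_share_le) (use w wl G in auto)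
  finally show ?thesis
    using G(3) by (simp add: pf_expansion_eq)
qed

theorem lemma6p2:
  shows "rep_expanded (proportional_fair :: 'e mechanism)"
  unfolding rep_expanded_def
  by (rule exI[of _ "\<lambda>_. 2"], rule exI[of _ pf_exp_rest], rule exI[of _ pf_exp_own],
      rule exI[of _ "\<lambda>a _. 2 powr (a - 1)"])
    (use pf_exponents_admissible proportional_fair_le_expansion in auto)

end
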